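(* Let $U\subset(0,1)^m$ be open and let $b:U\to\mathbb{R}$ be given by $b(x)=ax^\mu=a\prod_{i=1}^m x_i^{\mu_i}$ for some $a\in\mathbb{R}$ and $\mu\in\mathbb{R}^m$. If $b$ is bounded, then $b$ is weakly $(M,B,0)$-mild, where $M=\max(1,|\mu_1|,\ldots,|\mu_m|)$ and $B=\sup_{x\in U}|b(x)|$.
   Context: For $W\subset(0,1)^d$ open, $A,B>0$, $C\ge0$: $g:W\to\mathbb{R}$ is weakly $(A,B,C)$-mild if it is $C^\infty$ and $|g^{(\nu)}(x)|\le B^{C+1}A^{|\nu|}|\nu|!^{C+1}/x^\nu$ for all $x\in W$ and $\nu\in\mathbb{N}^d$, where $x^\nu=\prod x_i^{\nu_i}$, $|\nu|=\sum\nu_i$, and $g^{(\nu)}=\partial^{|\nu|}g/\partial x_1^{\nu_1}\cdots\partial x_d^{\nu_d}$. *)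

theory Defs
  imports "HOL-Analysis.Analysis"
begin

definition open_unit_cube :: "(real^'n) set" where
  "open_unit_cube = {x. \<forall>i. 0 < x$i \<and> x$i < 1}"

definition upd_coord :: "real^'n \<Rightarrow> 'n \<Rightarrow> real \<Rightarrow> real^'n" where
  "upd_coord x i t = (\<chi> j. if j = i then t else x$j)"

definition partial :: "'n \<Rightarrow> (real^'n \<Rightarrow> real) \<Rightarrow> (real^'n \<Rightarrow> real)" where
  "partial i f = (\<lambda>x. deriv (\<lambda>t. f (upd_coord x i t)) (x$i))"

text \<open>Iterated partial derivative along a list of coordinate directions
  (the head of the list is differentiated last).\<close>
fun partials :: "'n list \<Rightarrow> (real^'n \<Rightarrow> real) \<Rightarrow> (real^'n \<Rightarrow> real)" where
  "partials [] f = f"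
| "partials (i # is) f = partial i (partials is f)"

definition smooth_on :: "(real^'n) set \<Rightarrow> (real^'n \<Rightarrow> real) \<Rightarrow> bool" where
  "smooth_on W g \<longleftrightarrow>
     (\<forall>ds. continuous_on W (partials ds g) \<and>
        (\<forall>x\<in>W. \<forall>i. (\<lambda>t. partials ds g (upd_coord x i t)) differentiable (at (x$i))))"

text \<open>g^(nu): the partial derivative with multi-index nu, i.e. obtained by
  differentiating nu i times in coordinate i. For a C^infinity function this
  does not depend on the order, so we require the bound for every ordering
  (every list of directions ds with count_list ds i = nu i).\<close>
definition weakly_mild :: "(real^'n) set \<Rightarrow> real \<Rightarrow> real \<Rightarrow> real \<Rightarrow> (real^'n \<Rightarrow> real) \<Rightarrow> bool" where
  "weakly_mild W A B C g \<longleftrightarrow>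
     smooth_on W g \<and>
     (\<forall>x\<in>W. \<forall>nu::'n \<Rightarrow> nat. \<forall>ds. (\<forall>i. count_list ds i = nu i) \<longrightarrow>
        \<bar>partials ds g x\<bar> \<le>
          B powr (C + 1) * A ^ (\<Sum>i\<in>UNIV. nu i) * (fact (\<Sum>i\<in>UNIV. nu i)) powr (C + 1)
          / (\<Prod>i\<in>UNIV. (x$i) ^ (nu i)))"

end

theory Submission
  imports Defs
begin

text \<open>Differentiating \<open>t powr \<mu>\<^sub>i\<close> \<open>k\<close> times gives the falling factorial
  \<open>\<mu>\<^sub>i (\<mu>\<^sub>i - 1) \<dots> (\<mu>\<^sub>i - k + 1)\<close> times \<open>t powr (\<mu>\<^sub>i - k)\<close>, so the partial derivative of \<open>b\<close>
  of multi-index \<open>\<nu>\<close> is \<open>b(x)\<close> times a product of falling factorials, divided by \<open>x\<^sup>\<nu>\<close>.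
  As \<open>|\<mu>\<^sub>i - j| \<le> M (j + 1)\<close>, a falling factorial of \<open>\<mu>\<^sub>i\<close> with \<open>k\<close> factors is at most \<open>M\<^sup>k k!\<close>,
  and \<open>\<Prod>\<^sub>i \<nu>\<^sub>i! \<le> |\<nu>|!\<close> combines these bounds into \<open>M\<^bsup>|\<nu>|\<^esup> |\<nu>|!\<close>.\<close>

definition falling_fact :: "real \<Rightarrow> nat \<Rightarrow> real" where
  "falling_fact m k = (\<Prod>j<k. m - real j)"

lemma falling_fact_Suc: "falling_fact m (Suc k) = falling_fact m k * (m - real k)"
  by (simp add: falling_fact_def)

lemma abs_falling_fact_le:
  assumes "\<bar>m\<bar> \<le> M" "1 \<le> M"
  shows "\<bar>falling_fact m k\<bar> \<le> M ^ k * fact k"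
proof -
  have "\<bar>falling_fact m k\<bar> = (\<Prod>j<k. \<bar>m - real j\<bar>)"
    by (simp add: falling_fact_def abs_prod)
  also have "\<dots> \<le> (\<Prod>j<k. M * real (Suc j))"
  proof (rule prod_mono)
    fix j
    have "\<bar>m - real j\<bar> \<le> M + M * real j"
      using assms mult_right_mono[of 1 M "real j"] by linarith
    then show "0 \<le> \<bar>m - real j\<bar> \<and> \<bar>m - real j\<bar> \<le> M * real (Suc j)"
      by (simp add: algebra_simps)
  qed
  also have "\<dots> = M ^ k * fact k"
    by (simp add: prod.distrib fact_prod_Suc lessThan_atLeast0)
  finally show ?thesis .
qed

lemma prod_fact_le_fact_sum:
  assumes "finite A"
  shows "(\<Prod>i\<in>A. fact (n i) :: nat) \<le> fact (\<Sum>i\<in>A. n i)"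
  using assms
proof (induction A rule: finite_induct)
  case empty
  then show ?case by simp
next
  case (insert x A)
  then have "(\<Prod>i\<in>insert x A. fact (n i) :: nat) \<le> fact (n x) * fact (\<Sum>i\<in>A. n i)"
    by simp
  also have "\<dots> \<le> fact (n x + (\<Sum>i\<in>A. n i))"
    by (rule dvd_imp_le[OF fact_fact_dvd_fact]) simp
  finally show ?case
    using insert by simp
qed

lemma upd_coord_nth: "upd_coord x i t $ j = (if j = i then t else x $ j)"
  by (simp add: upd_coord_def)

lemma upd_coord_same: "upd_coord x i (x $ i) = x"
  by (simp add: upd_coord_def vec_eq_iff)

lemma upd_coord_eq_add_axis: "upd_coord x i t = x + (t - x $ i) *\<^sub>R axis i 1"
  by (simp add: upd_coord_def vec_eq_iff axis_def)

lemma open_vimage_upd_coord: "open U \<Longrightarrow> open (upd_coord x i -` U)"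
  unfolding upd_coord_eq_add_axis by (intro open_vimage continuous_intros) auto

lemma has_real_derivative_upd_coord_transform:
  assumes "open U" "x \<in> U" "\<And>y. y \<in> U \<Longrightarrow> g y = h y"
    and "((\<lambda>t. h (upd_coord x i t)) has_real_derivative D) (at (x $ i))"
  shows "((\<lambda>t. g (upd_coord x i t)) has_real_derivative D) (at (x $ i))"
  by (rule has_field_derivative_transform_within_open[OF assms(4) open_vimage_upd_coord[of U x i, OF assms(1)]])
    (use assms(2,3) in \<open>simp_all add: upd_coord_same\<close>)

definition monomial_partial :: "real \<Rightarrow> real^'n \<Rightarrow> 'n list \<Rightarrow> real^'n \<Rightarrow> real" where
  "monomial_partial a mu ds x =
     a * (\<Prod>j\<in>UNIV. falling_fact (mu$j) (count_list ds j) * (x$j) powr (mu$j - real (count_list ds j)))"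

lemma monomial_partial_Nil: "monomial_partial a mu [] x = a * (\<Prod>j\<in>UNIV. (x$j) powr (mu$j))"
  by (simp add: monomial_partial_def falling_fact_def)

lemma monomial_partial_split_coord:
  "monomial_partial a mu ds (upd_coord x i t) =
     a * (\<Prod>j\<in>UNIV-{i}. falling_fact (mu$j) (count_list ds j) * (x$j) powr (mu$j - real (count_list ds j)))
       * (falling_fact (mu$i) (count_list ds i) * t powr (mu$i - real (count_list ds i)))"
  unfolding monomial_partial_def
  by (subst prod.remove[of UNIV i]) (auto simp: upd_coord_nth intro!: prod.cong)

lemma has_real_derivative_monomial_partial:
  assumes "0 < x $ i"
  shows "((\<lambda>t. monomial_partial a mu ds (upd_coord x i t))
           has_real_derivative monomial_partial a mu (i # ds) x) (at (x $ i))"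
proof -
  define k where "k = count_list ds i"
  define K where "K = a * (\<Prod>j\<in>UNIV-{i}.
      falling_fact (mu$j) (count_list ds j) * (x$j) powr (mu$j - real (count_list ds j)))"
  have "((\<lambda>t. K * (falling_fact (mu$i) k * t powr (mu$i - k))) has_real_derivative
          K * (falling_fact (mu$i) k * ((mu$i - k) * (x$i) powr (mu$i - k - 1)))) (at (x $ i))"
    by (intro DERIV_cmult has_real_derivative_powr assms)
  moreover have "K * (falling_fact (mu$i) k * ((mu$i - k) * (x$i) powr (mu$i - k - 1)))
      = monomial_partial a mu (i # ds) x"
  proof -
    have "K = a * (\<Prod>j\<in>UNIV-{i}. falling_fact (mu$j) (count_list (i # ds) j)
                   * (x$j) powr (mu$j - real (count_list (i # ds) j)))"
      unfolding K_def by (auto intro!: prod.cong)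
    then show ?thesis
      using monomial_partial_split_coord[of a mu "i # ds" x i "x $ i"]
      by (simp add: upd_coord_same k_def falling_fact_Suc diff_diff_add algebra_simps)
  qed
  ultimately show ?thesis
    by (simp add: monomial_partial_split_coord K_def k_def)
qed

lemma partials_eq_monomial_partial:
  assumes "open U" "\<And>x i. x \<in> U \<Longrightarrow> 0 < x $ i"
    and "\<And>x. x \<in> U \<Longrightarrow> f x = a * (\<Prod>i\<in>UNIV. (x$i) powr (mu$i))"
    and "x \<in> U"
  shows "partials ds f x = monomial_partial a mu ds x"
  using assms(4)
proof (induction ds arbitrary: x)
  case Nil
  then show ?case by (simp add: assms(3) monomial_partial_Nil)
next
  case (Cons i ds)
  have "((\<lambda>t. partials ds f (upd_coord x i t)) has_real_derivative monomial_partial a mu (i # ds) x)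
          (at (x $ i))"
    using has_real_derivative_upd_coord_transform[OF assms(1) Cons.prems Cons.IH
        has_real_derivative_monomial_partial[OF assms(2)[OF Cons.prems]]]
    by simp
  then show ?case
    by (simp add: partial_def DERIV_imp_deriv)
qed

lemma smooth_on_monomial:
  assumes "open U" "\<And>x i. x \<in> U \<Longrightarrow> 0 < x $ i"
    and "\<And>x. x \<in> U \<Longrightarrow> f x = a * (\<Prod>i\<in>UNIV. (x$i) powr (mu$i))"
  shows "smooth_on U f"
  unfolding smooth_on_def
proof (intro allI conjI ballI)
  fix ds
  have "\<forall>x\<in>U. x $ j \<noteq> 0" for j
    using assms(2) by (metis less_irrefl)
  then have "continuous_on U (monomial_partial a mu ds)"
    unfolding monomial_partial_def by (intro continuous_intros) simp_all
  then show "continuous_on U (partials ds f)"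
    using partials_eq_monomial_partial[OF assms] continuous_on_cong by blast
next
  fix ds x i
  assume "x \<in> U"
  have "((\<lambda>t. partials ds f (upd_coord x i t)) has_real_derivative monomial_partial a mu (i # ds) x)
          (at (x $ i))"
    using has_real_derivative_upd_coord_transform[OF assms(1) \<open>x \<in> U\<close>
        partials_eq_monomial_partial[OF assms]
        has_real_derivative_monomial_partial[OF assms(2)[OF \<open>x \<in> U\<close>]]]
    by simp
  then show "(\<lambda>t. partials ds f (upd_coord x i t)) differentiable at (x $ i)"
    using real_differentiable_def by blast
qed

lemma abs_monomial_partial_le:
  fixes x :: "real^'n"
  assumes "\<And>i. 0 < x $ i" "\<And>i. count_list ds i = nu i"
    and "\<And>i. \<bar>mu$i\<bar> \<le> M" "1 \<le> M"
  shows "\<bar>monomial_partial a mu ds x\<bar> \<le>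
    \<bar>a * (\<Prod>i\<in>UNIV. (x$i) powr (mu$i))\<bar> * (M ^ (\<Sum>i\<in>UNIV. nu i) * fact (\<Sum>i\<in>UNIV. nu i))
      / (\<Prod>i\<in>UNIV. (x$i) ^ nu i)"
proof -
  have "monomial_partial a mu ds x
      = a * (\<Prod>i\<in>UNIV. (x$i) powr (mu$i)) * (\<Prod>i\<in>UNIV. falling_fact (mu$i) (nu i))
          / (\<Prod>i\<in>UNIV. (x$i) ^ nu i)"
    using assms(1,2)
    by (simp add: monomial_partial_def powr_diff powr_realpow prod.distrib prod_dividef)
  moreover have den_pos: "0 < (\<Prod>i\<in>UNIV. (x$i) ^ nu i)"
    using assms(1) by (intro prod_pos) auto
  ultimately have eq: "\<bar>monomial_partial a mu ds x\<bar>
      = \<bar>a * (\<Prod>i\<in>UNIV. (x$i) powr (mu$i))\<bar> * (\<Prod>i\<in>UNIV. \<bar>falling_fact (mu$i) (nu i)\<bar>)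
          / (\<Prod>i\<in>UNIV. (x$i) ^ nu i)"
    by (simp only: abs_mult abs_divide abs_of_pos[OF den_pos]
        abs_prod[where f = "\<lambda>i. falling_fact (mu$i) (nu i)"])
  have "(\<Prod>i\<in>UNIV. \<bar>falling_fact (mu$i) (nu i)\<bar>) \<le> (\<Prod>i\<in>UNIV. M ^ nu i * fact (nu i))"
    by (intro prod_mono conjI abs_ge_zero abs_falling_fact_le assms(3,4))
  also have "\<dots> = M ^ (\<Sum>i\<in>UNIV. nu i) * real (\<Prod>i\<in>UNIV. fact (nu i) :: nat)"
    by (simp add: prod.distrib power_sum)
  also have "\<dots> \<le> M ^ (\<Sum>i\<in>UNIV. nu i) * fact (\<Sum>i\<in>UNIV. nu i)"
  proof (rule mult_left_mono)
    show "real (\<Prod>i\<in>UNIV. fact (nu i) :: nat) \<le> fact (\<Sum>i\<in>UNIV. nu i)"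
      using prod_fact_le_fact_sum[of UNIV nu] by (metis finite of_nat_fact of_nat_le_iff)
    show "0 \<le> M ^ (\<Sum>i\<in>UNIV. nu i)"
      using assms(4) by simp
  qed
  finally show ?thesis
    unfolding eq using den_pos
    by (intro divide_right_mono mult_left_mono) auto
qed

lemma abs_partials_monomial_le:
  assumes "open U" "\<And>x i. x \<in> U \<Longrightarrow> 0 < x $ i"
    and "\<And>x. x \<in> U \<Longrightarrow> f x = a * (\<Prod>i\<in>UNIV. (x$i) powr (mu$i))"
    and "x \<in> U" "\<And>i. count_list ds i = nu i"
    and "\<And>i. \<bar>mu$i\<bar> \<le> M" "1 \<le> M" "\<bar>f x\<bar> \<le> B"
  shows "\<bar>partials ds f x\<bar> \<le>
    B * M ^ (\<Sum>i\<in>UNIV. nu i) * fact (\<Sum>i\<in>UNIV. nu i) / (\<Prod>i\<in>UNIV. (x$i) ^ nu i)"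
proof -
  have "\<bar>partials ds f x\<bar> \<le> \<bar>f x\<bar> * (M ^ (\<Sum>i\<in>UNIV. nu i) * fact (\<Sum>i\<in>UNIV. nu i))
          / (\<Prod>i\<in>UNIV. (x$i) ^ nu i)"
    using abs_monomial_partial_le[of x ds nu mu M a] partials_eq_monomial_partial[OF assms(1-4)]
      assms(2-7) by simp
  also have "\<dots> \<le> B * (M ^ (\<Sum>i\<in>UNIV. nu i) * fact (\<Sum>i\<in>UNIV. nu i))
          / (\<Prod>i\<in>UNIV. (x$i) ^ nu i)"
    using assms(2,4,7,8)
    by (intro divide_right_mono mult_right_mono prod_nonneg) (auto simp: less_imp_le)
  finally show ?thesis
    by (simp add: mult.assoc)
qed

lemma abs_le_Sup_abs_image:
  fixes f :: "'a \<Rightarrow> real"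
  assumes "bounded (f ` U)" "x \<in> U"
  shows "\<bar>f x\<bar> \<le> Sup ((\<lambda>x. \<bar>f x\<bar>) ` U)"
proof -
  obtain K where "\<forall>y\<in>f ` U. norm y \<le> K"
    using assms(1) bounded_iff by blast
  then have "bdd_above ((\<lambda>x. \<bar>f x\<bar>) ` U)"
    by (auto intro!: bdd_aboveI2[where M = K])
  then show ?thesis
    using assms(2) by (auto intro: cSup_upper)
qed

theorem mainTheorem6:
  fixes U :: "(real^'m) set" and a :: real and mu :: "real^'m" and b :: "real^'m \<Rightarrow> real"
  assumes "open U" and "U \<subseteq> open_unit_cube"
    and "\<And>x. x \<in> U \<Longrightarrow> b x = a * (\<Prod>i\<in>UNIV. (x$i) powr (mu$i))"
    and "bounded (b ` U)"
  shows "weakly_mild U (max 1 (Max (range (\<lambda>i. \<bar>mu$i\<bar>)))) (Sup ((\<lambda>x. \<bar>b x\<bar>) ` U)) 0 b"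
proof -
  define M where "M = max 1 (Max (range (\<lambda>i. \<bar>mu$i\<bar>)))"
  define B where "B = Sup ((\<lambda>x. \<bar>b x\<bar>) ` U)"
  have pos: "0 < x $ i" if "x \<in> U" for x i
    using assms(2) that by (auto simp: open_unit_cube_def)
  have mu_le_M: "\<bar>mu$i\<bar> \<le> M" for i
    unfolding M_def by (rule max.coboundedI2, rule Max_ge) auto
  have b_le_B: "\<bar>b x\<bar> \<le> B" if "x \<in> U" for x
    unfolding B_def using abs_le_Sup_abs_image[OF assms(4) that] .
  show ?thesis
    unfolding weakly_mild_def M_def[symmetric] B_def[symmetric]
  proof (intro conjI ballI allI impI smooth_on_monomial[OF assms(1) pos assms(3)])
    fix x and nu :: "'m \<Rightarrow> nat" and ds :: "'m list"
    assume "x \<in> U" "\<forall>i. count_list ds i = nu i"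
    moreover have "0 \<le> B"
      using b_le_B[OF \<open>x \<in> U\<close>] by linarith
    ultimately show "\<bar>partials ds b x\<bar> \<le> B powr (0 + 1) * M ^ (\<Sum>i\<in>UNIV. nu i)
        * fact (\<Sum>i\<in>UNIV. nu i) powr (0 + 1) / (\<Prod>i\<in>UNIV. (x$i) ^ nu i)"
      using abs_partials_monomial_le[OF assms(1) pos assms(3) \<open>x \<in> U\<close> _ mu_le_M _ b_le_B]
      by (simp add: M_def)
  qed
qed

end
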